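(* Let $n\ge 2$ and let $\mathbf p^0\in\Delta_n$ be arbitrary. Let $m$ be the number of indices $i$ with $p^0_i=0$ (so $0\le m\le n-1$). Consider the trajectory $\mathbf p^{t+1}=F(\mathbf p^t)$, $t=0,1,\dots$, and $\mathbf r^t$ defined by $r^t_i=(1-p^t_i)/(n-1)$. Then the limits $\mathbf p^\infty=\lim_{t\to\infty}\mathbf p^t$ and $\mathbf r^\infty=\lim_{t\to\infty}\mathbf r^t$ exist, $\mathbf p^\infty$ is a fixed point of $F$, and: 1) if $m=0$, then $\mathbf p^\infty=\mathbf r^\infty$ and $p^\infty_i=r^\infty_i=\frac1n$ for all $i$; 2) if $1\le m<n$, then $\mathbf p^\infty\neq\mathbf r^\infty$; for every $j$ with $p^0_j=0$ one has $p^\infty_j=0$ and $r^\infty_j=\frac{1}{n-1}$, and for every $i$ with $p^0_i>0$ one has $p^\infty_i=\frac{1}{n-m}$ and $r^\infty_i=\frac{n-m-1}{(n-1)(n-m)}$. Moreover, among these limit states only $\mathbf p^\infty=(\frac1n,\dots,\frac1n)$ is stable: it is a locally asymptotically stable fixed point of $F$ on $\Delta_n$, while every limit state with $m\ge1$ is an unstable fixed point of $F$ on $\Delta_n$.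
   Context: Let $n\ge 2$ and $\Delta_n=\{\mathbf p=(p_1,\dots,p_n)\in\mathbb R^n: p_i\ge 0,\ \sum_i p_i=1\}$ (stochastic vectors). For $\mathbf p\in\Delta_n$ put $L(\mathbf p)=\sum_{k=1}^n p_k^2$ and define $F:\Delta_n\to\Delta_n$ by $F(\mathbf p)_i=p_i\,\frac{n-p_i}{n-L(\mathbf p)}$. (This is the map $p_i\mapsto p_i(1+r_i)/(1+\sum_k p_k r_k)$ with $r_i=(1-p_i)/(n-1)$.) Write $L^t=L(\mathbf p^t)$. *)

theory Defs
  imports "HOL-Analysis.Analysis"
begin

text \<open>Vectors in R^n are modelled as real ^ 'n, with n = CARD('n).\<close>

definition Delta :: "(real ^ 'n) set" where
  "Delta = {p. (\<forall>i. p $ i \<ge> 0) \<and> (\<Sum>i\<in>UNIV. p $ i) = 1}"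

definition Lsq :: "real ^ 'n \<Rightarrow> real" where
  "Lsq p = (\<Sum>i\<in>UNIV. (p $ i)^2)"

definition Fmap :: "real ^ 'n \<Rightarrow> real ^ 'n" where
  "Fmap p = (\<chi> i. p $ i * (real CARD('n) - p $ i) / (real CARD('n) - Lsq p))"

definition rvec :: "real ^ 'n \<Rightarrow> real ^ 'n" where
  "rvec p = (\<chi> i. (1 - p $ i) / (real CARD('n) - 1))"

definition stable_on :: "'a::metric_space set \<Rightarrow> ('a \<Rightarrow> 'a) \<Rightarrow> 'a \<Rightarrow> bool" where
  "stable_on S f x \<longleftrightarrow>
     (\<forall>\<epsilon>>0. \<exists>\<delta>>0. \<forall>y\<in>S. dist y x < \<delta> \<longrightarrow> (\<forall>t. dist ((f ^^ t) y) x < \<epsilon>))"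

definition loc_asym_stable_on :: "'a::metric_space set \<Rightarrow> ('a \<Rightarrow> 'a) \<Rightarrow> 'a \<Rightarrow> bool" where
  "loc_asym_stable_on S f x \<longleftrightarrow> stable_on S f x \<and>
     (\<exists>\<delta>>0. \<forall>y\<in>S. dist y x < \<delta> \<longrightarrow> (\<lambda>t. (f ^^ t) y) \<longlonglongrightarrow> x)"

definition unstable_on :: "'a::metric_space set \<Rightarrow> ('a \<Rightarrow> 'a) \<Rightarrow> 'a \<Rightarrow> bool" where
  "unstable_on S f x \<longleftrightarrow> \<not> stable_on S f x"

end

theory Submission
  imports Defs
begin

(*
  The map F preserves the zero pattern and the order of the coordinates of p (because
  x (n - x) is increasing on [0, 1]).  As L(p) is the mean of the coordinates weighted by p,
  it lies between the smallest positive coordinate p_b and the largest one p_a.  Hence p_b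
  never decreases, and F contracts the gap p_a - p_b by at least the factor 1 - mu/n, where
  mu is the smallest positive coordinate of p^0.  Since the coordinates on the support sum
  to 1, they all converge geometrically to 1/(n - m).
  Near the centre every coordinate is positive and the gap is small, which gives asymptotic
  stability.  Every other limit has a zero coordinate, and points just beside it, towards
  the centre, have full support, so their orbits run off to the centre.
*)

abbreviation simplex_center :: "real ^ 'n" where
  "simplex_center \<equiv> \<chi> i. 1 / real CARD('n)"

lemma Delta_nonneg: "y \<in> Delta \<Longrightarrow> 0 \<le> y $ i"
  by (simp add: Delta_def)

lemma Delta_le_1:
  fixes y :: "real ^ 'n"
  assumes "y \<in> Delta"
  shows "y $ i \<le> 1"
proof -
  have "y $ i \<le> (\<Sum>j\<in>UNIV. y $ j)"
    using assms by (intro member_le_sum) (auto simp: Delta_def)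
  thus ?thesis using assms by (simp add: Delta_def)
qed

lemma Delta_support_nonempty:
  assumes "y \<in> Delta"
  shows "{j. y $ j \<noteq> 0} \<noteq> {}"
proof
  assume "{j. y $ j \<noteq> 0} = {}"
  hence "\<And>j. y $ j = 0" by auto
  thus False using assms by (simp add: Delta_def)
qed

lemma card_support_eq:
  fixes y :: "real ^ 'n"
  shows "real (card {j. y $ j \<noteq> 0}) = real CARD('n) - real (card {j. y $ j = 0})"
proof -
  have "{j. y $ j \<noteq> 0} = UNIV - {j. y $ j = 0}" by auto
  moreover have "card {j. y $ j = 0} \<le> CARD('n)" by (rule card_mono) auto
  ultimately show ?thesis by (simp add: card_Diff_subset of_nat_diff)
qed

lemma Delta_extreme_coords:
  fixes y :: "real ^ 'n"
  assumes "y \<in> Delta"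
  obtains a b where "\<And>i. y $ i \<le> y $ a" and "0 < y $ b" and "\<And>i. y $ i = 0 \<or> y $ b \<le> y $ i"
proof -
  define S where "S = {j. y $ j \<noteq> 0}"
  have S: "finite S" "S \<noteq> {}" using Delta_support_nonempty[OF assms] by (auto simp: S_def)
  define a where "a = arg_min_on (\<lambda>i. - y $ i) UNIV"
  define b where "b = arg_min_on (\<lambda>i. y $ i) S"
  have a: "- y $ a \<le> - y $ i" for i unfolding a_def by (rule arg_min_least) auto
  have bS: "b \<in> S" unfolding b_def by (rule arg_min_if_finite(1)[OF S])
  have b: "y $ b \<le> y $ i" if "i \<in> S" for i
    unfolding b_def by (rule arg_min_least[OF S that])
  show ?thesis
  proof (rule that)
    show "y $ i \<le> y $ a" for i using a[of i] by simp
    show "0 < y $ b" using bS Delta_nonneg[OF assms, of b] by (simp add: S_def)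
    show "y $ i = 0 \<or> y $ b \<le> y $ i" for i using b[of i] by (auto simp: S_def)
  qed
qed

lemma Delta_coord_deviation_le:
  fixes z :: "real ^ 'n"
  assumes z: "z \<in> Delta" and a: "\<And>j. z $ j \<le> z $ a"
    and b: "\<And>j. z $ j = 0 \<or> z $ b \<le> z $ j" and i: "z $ i \<noteq> 0"
  shows "\<bar>z $ i - 1 / real (card {j. z $ j \<noteq> 0})\<bar> \<le> z $ a - z $ b"
proof -
  define S where "S = {j. z $ j \<noteq> 0}"
  have k: "real (card S) > 0"
    using Delta_support_nonempty[OF z] by (simp add: S_def card_gt_0_iff)
  have "(\<Sum>j\<in>S. z $ j) = (\<Sum>j\<in>UNIV. z $ j)"
    by (rule sum.mono_neutral_left) (auto simp: S_def)
  hence sum_S: "(\<Sum>j\<in>S. z $ j) = 1" using z by (simp add: Delta_def)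
  have "real (card S) * z $ b = (\<Sum>j\<in>S. z $ b)" by simp
  also have "\<dots> \<le> (\<Sum>j\<in>S. z $ j)" by (rule sum_mono) (use b in \<open>auto simp: S_def\<close>)
  finally have "z $ b \<le> 1 / real (card S)" using k sum_S by (simp add: field_simps)
  moreover have "1 / real (card S) \<le> z $ a"
  proof -
    have "1 \<le> (\<Sum>j\<in>S. z $ a)" unfolding sum_S[symmetric] by (rule sum_mono) (rule a)
    thus ?thesis using k by (simp add: field_simps)
  qed
  moreover have "z $ b \<le> z $ i" using b[of i] i by auto
  ultimately show ?thesis using a[of i] by (simp add: S_def abs_le_iff)
qed

text \<open>\<open>Lsq y = (\<Sum>i. y\<^sub>i \<cdot> y\<^sub>i)\<close> is the mean of the coordinates of \<open>y\<close> weighted by \<open>y\<close>.\<close>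
lemma Lsq_le:
  fixes y :: "real ^ 'n"
  assumes "y \<in> Delta" "\<And>i. y $ i \<le> c"
  shows "Lsq y \<le> c"
proof -
  have "Lsq y \<le> (\<Sum>i\<in>UNIV. y $ i * c)"
    unfolding Lsq_def power2_eq_square
    by (intro sum_mono mult_left_mono) (use assms in \<open>auto simp: Delta_def\<close>)
  also have "\<dots> = c" using assms(1) by (simp add: Delta_def sum_distrib_right[symmetric])
  finally show ?thesis .
qed

lemma Lsq_ge:
  fixes y :: "real ^ 'n"
  assumes "y \<in> Delta" "\<And>i. y $ i = 0 \<or> c \<le> y $ i"
  shows "c \<le> Lsq y"
proof -
  have "c = (\<Sum>i\<in>UNIV. y $ i * c)" using assms(1) by (simp add: Delta_def sum_distrib_right[symmetric])
  also have "\<dots> \<le> Lsq y"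
    unfolding Lsq_def power2_eq_square
  proof (intro sum_mono)
    fix i
    show "y $ i * c \<le> y $ i * y $ i"
      using assms(2)[of i] Delta_nonneg[OF assms(1), of i] by (auto intro: mult_left_mono)
  qed
  finally show ?thesis .
qed

lemma Lsq_le_1: "y \<in> Delta \<Longrightarrow> Lsq y \<le> 1"
  by (rule Lsq_le) (auto intro: Delta_le_1)

lemma Fmap_nth: "Fmap y $ i = y $ i * (real CARD('n) - y $ i) / (real CARD('n) - Lsq y)"
  for y :: "real ^ 'n"
  by (simp add: Fmap_def)

lemma tendsto_rvec: "(f \<longlongrightarrow> p) F \<Longrightarrow> ((\<lambda>x. rvec (f x)) \<longlongrightarrow> rvec p) F"
  unfolding rvec_def divide_inverse
  by (intro tendsto_vec_lambda tendsto_mult_right tendsto_diff tendsto_const tendsto_vec_nth)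

definition uniform_on_support :: "real ^ 'n \<Rightarrow> real ^ 'n" where
  "uniform_on_support y = (\<chi> i. if y $ i = 0 then 0 else 1 / real (card {j. y $ j \<noteq> 0}))"

lemma uniform_on_support_Delta:
  fixes y :: "real ^ 'n"
  assumes y: "y \<in> Delta"
  shows "uniform_on_support y \<in> Delta"
proof -
  have "(\<Sum>i\<in>UNIV. uniform_on_support y $ i) = (\<Sum>i\<in>{j. y $ j \<noteq> 0}. 1 / real (card {j. y $ j \<noteq> 0}))"
    unfolding uniform_on_support_def by (rule sum.mono_neutral_cong_right) auto
  also have "\<dots> = 1" using Delta_support_nonempty[OF y] by simp
  finally show ?thesis by (simp add: Delta_def uniform_on_support_def)
qed

lemma uniform_on_support_eq_center: "(\<And>i. y $ i \<noteq> 0) \<Longrightarrow> uniform_on_support y = simplex_center"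
  by (simp add: uniform_on_support_def vec_eq_iff)

lemma dist_simplex_center_coord_le:
  "\<bar>y $ i - 1 / real CARD('n)\<bar> \<le> dist y (simplex_center :: real ^ 'n)"
  using dist_vec_nth_le[of y i simplex_center] by (simp add: dist_real_def)

lemma near_simplex_center_pos:
  fixes y :: "real ^ 'n"
  assumes "dist y simplex_center < 1 / real CARD('n)"
  shows "0 < y $ i"
  using dist_simplex_center_coord_le[of y i] assms by linarith

lemma segment_to_simplex_center:
  fixes q :: "real ^ 'n"
  assumes q: "q \<in> Delta" and s: "0 < s" "s \<le> 1"
  shows "q + s *\<^sub>R (simplex_center - q) \<in> Delta" and "0 < (q + s *\<^sub>R (simplex_center - q)) $ i"
proof -
  let ?y = "q + s *\<^sub>R (simplex_center - q)"
  have y_nth: "?y $ j = (1 - s) * q $ j + s / real CARD('n)" for j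
    by (simp add: algebra_simps)
  show pos: "0 < ?y $ j" for j
    unfolding y_nth using s Delta_nonneg[OF q, of j] by (intro add_nonneg_pos) auto
  have "(\<Sum>j\<in>UNIV. ?y $ j) = (\<Sum>j\<in>UNIV. (1 - s) * q $ j + s / real CARD('n))"
    by (simp only: y_nth)
  also have "\<dots> = (1 - s) * (\<Sum>j\<in>UNIV. q $ j) + s"
    by (simp add: sum.distrib sum_distrib_left)
  also have "\<dots> = 1" using q by (simp add: Delta_def)
  finally show "?y \<in> Delta" unfolding Delta_def using pos by (auto intro: less_imp_le)
qed

lemma unstable_onI:
  fixes f :: "'a::metric_space \<Rightarrow> 'a"
  assumes "x \<noteq> c" and near: "\<And>d. 0 < d \<Longrightarrow> \<exists>y\<in>S. dist y x < d \<and> (\<lambda>t. (f ^^ t) y) \<longlonglongrightarrow> c"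
  shows "unstable_on S f x"
  unfolding unstable_on_def stable_on_def
proof
  define e where "e = dist c x"
  have "0 < e / 2" using assms(1) by (simp add: e_def)
  assume "\<forall>\<epsilon>>0. \<exists>\<delta>>0. \<forall>y\<in>S. dist y x < \<delta> \<longrightarrow> (\<forall>t. dist ((f ^^ t) y) x < \<epsilon>)"
  then obtain d where "0 < d" and d: "\<And>y t. y \<in> S \<Longrightarrow> dist y x < d \<Longrightarrow> dist ((f ^^ t) y) x < e / 2"
    using \<open>0 < e / 2\<close> by blast
  then obtain y where "y \<in> S" "dist y x < d" and lim: "(\<lambda>t. (f ^^ t) y) \<longlonglongrightarrow> c"
    using near by blast
  have "\<forall>\<^sub>F t in sequentially. dist ((f ^^ t) y) c < e / 2"
    using tendstoD[OF lim \<open>0 < e / 2\<close>] .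
  then obtain t where "dist ((f ^^ t) y) c < e / 2"
    unfolding eventually_sequentially by (metis order_refl)
  moreover have "dist ((f ^^ t) y) x < e / 2" using d \<open>y \<in> S\<close> \<open>dist y x < d\<close> by blast
  ultimately show False
    using dist_triangle[of c x "(f ^^ t) y"] by (simp add: e_def dist_commute)
qed

context
  assumes card_ge_2: "CARD('n::finite) \<ge> 2"
begin

lemma card_ge_2_real: "real CARD('n) \<ge> 2"
  using card_ge_2 by simp

lemma Lsq_less_card: "y \<in> Delta \<Longrightarrow> Lsq y < real CARD('n)" for y :: "real ^ 'n"
  using Lsq_le_1[of y] card_ge_2_real by linarith

lemma Fmap_Delta:
  fixes y :: "real ^ 'n"
  assumes y: "y \<in> Delta"
  shows "Fmap y \<in> Delta"
proof -
  let ?N = "real CARD('n)"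
  have L: "Lsq y < ?N" using Lsq_less_card[OF y] .
  have "0 \<le> Fmap y $ i" for i
    using Delta_nonneg[OF y, of i] Delta_le_1[OF y, of i] L card_ge_2_real by (simp add: Fmap_nth)
  moreover have "(\<Sum>i\<in>UNIV. Fmap y $ i) = 1"
  proof -
    have "(\<Sum>i\<in>UNIV. y $ i * (?N - y $ i)) = ?N * (\<Sum>i\<in>UNIV. y $ i) - Lsq y"
      by (simp add: Lsq_def algebra_simps power2_eq_square sum_subtractf sum_distrib_left)
    also have "\<dots> = ?N - Lsq y" using y by (simp add: Delta_def)
    finally show ?thesis using L by (simp add: Fmap_nth sum_divide_distrib[symmetric])
  qed
  ultimately show ?thesis by (simp add: Delta_def)
qed

lemma Fmap_eq_0_iff:
  fixes y :: "real ^ 'n"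
  assumes y: "y \<in> Delta"
  shows "Fmap y $ i = 0 \<longleftrightarrow> y $ i = 0"
  using Lsq_less_card[OF y] Delta_le_1[OF y, of i] card_ge_2_real by (simp add: Fmap_nth)

lemma Fmap_mono:
  fixes y :: "real ^ 'n"
  assumes y: "y \<in> Delta" and ij: "y $ i \<le> y $ j"
  shows "Fmap y $ i \<le> Fmap y $ j"
proof -
  let ?N = "real CARD('n)"
  have "y $ j * (?N - y $ j) - y $ i * (?N - y $ i) = (y $ j - y $ i) * (?N - y $ i - y $ j)"
    by (simp add: algebra_simps)
  also have "\<dots> \<ge> 0"
    using ij Delta_le_1[OF y, of i] Delta_le_1[OF y, of j] card_ge_2_real by (intro mult_nonneg_nonneg) auto
  finally show ?thesis
    using Lsq_less_card[OF y] by (simp add: Fmap_nth divide_right_mono)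
qed

lemma Fmap_min_support_ge:
  fixes y :: "real ^ 'n"
  assumes y: "y \<in> Delta" and b: "\<And>i. y $ i = 0 \<or> y $ b \<le> y $ i"
  shows "y $ b \<le> Fmap y $ b"
proof -
  let ?N = "real CARD('n)"
  have "y $ b * (?N - Lsq y) \<le> y $ b * (?N - y $ b)"
    using Lsq_ge[OF y b] Delta_nonneg[OF y] by (intro mult_left_mono) auto
  thus ?thesis using Lsq_less_card[OF y] by (simp add: Fmap_nth le_divide_eq)
qed

text \<open>The gap between a largest coordinate and a smallest positive one shrinks by the factor
  \<open>(N - y\<^sub>a - y\<^sub>b) / (N - L) \<le> 1 - \<mu> / N\<close>, because \<open>L \<le> y\<^sub>a\<close> and \<open>\<mu> \<le> y\<^sub>b\<close>.\<close>
lemma Fmap_spread_contract: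
  fixes y :: "real ^ 'n"
  assumes y: "y \<in> Delta" and a: "\<And>i. y $ i \<le> y $ a" and mu: "0 \<le> mu" "mu \<le> y $ b"
  shows "Fmap y $ a - Fmap y $ b \<le> (1 - mu / real CARD('n)) * (y $ a - y $ b)"
proof -
  let ?N = "real CARD('n)"
  have N: "?N \<ge> 2" by (rule card_ge_2_real)
  have L: "Lsq y \<le> y $ a" "Lsq y < ?N" using Lsq_le[OF y a] Lsq_less_card[OF y] by auto
  have ya: "0 \<le> y $ a" "y $ a \<le> 1" using Delta_nonneg[OF y] Delta_le_1[OF y] by auto
  have "?N - y $ a - y $ b \<le> (1 - mu / ?N) * (?N - y $ a)"
  proof -
    have "mu / ?N * (?N - y $ a) \<le> mu" using N ya mu by (simp add: field_simps)
    thus ?thesis using mu by (simp add: algebra_simps)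
  qed
  also have "\<dots> \<le> (1 - mu / ?N) * (?N - Lsq y)"
    using L N mu Delta_le_1[OF y, of b] by (intro mult_left_mono) (auto simp: field_simps)
  finally have num: "(y $ a - y $ b) * (?N - y $ a - y $ b) \<le> (y $ a - y $ b) * ((1 - mu / ?N) * (?N - Lsq y))"
    using a[of b] by (intro mult_left_mono) auto
  have "Fmap y $ a - Fmap y $ b = (y $ a - y $ b) * (?N - y $ a - y $ b) / (?N - Lsq y)"
    by (simp add: Fmap_nth diff_divide_distrib[symmetric] algebra_simps)
  also have "\<dots> \<le> (1 - mu / ?N) * (y $ a - y $ b)"
    using num L(2) by (subst pos_divide_le_eq) (auto simp: mult_ac)
  finally show ?thesis .
qed

lemma Fmap_iter_Delta: "y \<in> Delta \<Longrightarrow> (Fmap ^^ t) y \<in> Delta" for y :: "real ^ 'n"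
  by (induction t) (auto intro: Fmap_Delta)

lemma Fmap_iter_eq_0_iff: "y \<in> Delta \<Longrightarrow> (Fmap ^^ t) y $ i = 0 \<longleftrightarrow> y $ i = 0" for y :: "real ^ 'n"
  by (induction t) (auto simp: Fmap_eq_0_iff Fmap_iter_Delta)

lemma Fmap_iter_mono:
  fixes y :: "real ^ 'n"
  assumes "y \<in> Delta" "y $ i \<le> y $ j"
  shows "(Fmap ^^ t) y $ i \<le> (Fmap ^^ t) y $ j"
  using assms by (induction t) (auto intro: Fmap_mono Fmap_iter_Delta)

lemma Fmap_iter_min_support:
  fixes y :: "real ^ 'n"
  assumes y: "y \<in> Delta" and b: "\<And>i. y $ i = 0 \<or> y $ b \<le> y $ i"
  shows "(Fmap ^^ t) y $ i = 0 \<or> (Fmap ^^ t) y $ b \<le> (Fmap ^^ t) y $ i"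
  using b[of i] Fmap_iter_eq_0_iff[OF y] Fmap_iter_mono[OF y] by blast

lemma Fmap_iter_min_support_ge:
  fixes y :: "real ^ 'n"
  assumes y: "y \<in> Delta" and b: "\<And>i. y $ i = 0 \<or> y $ b \<le> y $ i"
  shows "y $ b \<le> (Fmap ^^ t) y $ b"
proof (induction t)
  case (Suc t)
  have "(Fmap ^^ t) y $ b \<le> Fmap ((Fmap ^^ t) y) $ b"
    by (rule Fmap_min_support_ge[OF Fmap_iter_Delta[OF y] Fmap_iter_min_support[OF y b]])
  with Suc.IH show ?case by simp
qed simp

lemma Fmap_iter_spread_le:
  fixes y :: "real ^ 'n"
  assumes y: "y \<in> Delta" and a: "\<And>i. y $ i \<le> y $ a" and b: "\<And>i. y $ i = 0 \<or> y $ b \<le> y $ i"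
  shows "(Fmap ^^ t) y $ a - (Fmap ^^ t) y $ b \<le> (1 - y $ b / real CARD('n)) ^ t * (y $ a - y $ b)"
proof (induction t)
  case (Suc t)
  let ?z = "(Fmap ^^ t) y" and ?c = "1 - y $ b / real CARD('n)"
  have "0 \<le> ?c"
    using Delta_le_1[OF y, of b] card_ge_2_real by (simp add: field_simps)
  have "Fmap ?z $ a - Fmap ?z $ b \<le> ?c * (?z $ a - ?z $ b)"
    using Fmap_iter_Delta[OF y] Fmap_iter_mono[OF y a] Fmap_iter_min_support_ge[OF y b]
      Delta_nonneg[OF y, of b]
    by (intro Fmap_spread_contract) auto
  also have "\<dots> \<le> ?c * (?c ^ t * (y $ a - y $ b))"
    using Suc.IH \<open>0 \<le> ?c\<close> by (rule mult_left_mono)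
  finally show ?case by simp
qed simp

lemma Fmap_iter_deviation_le:
  fixes y :: "real ^ 'n"
  assumes y: "y \<in> Delta" and a: "\<And>i. y $ i \<le> y $ a" and b: "\<And>i. y $ i = 0 \<or> y $ b \<le> y $ i"
    and i: "y $ i \<noteq> 0"
  shows "\<bar>(Fmap ^^ t) y $ i - 1 / real (card {j. y $ j \<noteq> 0})\<bar>
    \<le> (1 - y $ b / real CARD('n)) ^ t * (y $ a - y $ b)"
proof -
  have "{j. (Fmap ^^ t) y $ j \<noteq> 0} = {j. y $ j \<noteq> 0}"
    using Fmap_iter_eq_0_iff[OF y] by blast
  hence "\<bar>(Fmap ^^ t) y $ i - 1 / real (card {j. y $ j \<noteq> 0})\<bar>
      \<le> (Fmap ^^ t) y $ a - (Fmap ^^ t) y $ b"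
    using Delta_coord_deviation_le[OF Fmap_iter_Delta[OF y] Fmap_iter_mono[OF y a]
        Fmap_iter_min_support[OF y b]] Fmap_iter_eq_0_iff[OF y] i
    by metis
  also have "\<dots> \<le> (1 - y $ b / real CARD('n)) ^ t * (y $ a - y $ b)"
    by (rule Fmap_iter_spread_le[OF y a b])
  finally show ?thesis .
qed

lemma Fmap_iter_tendsto_uniform_on_support:
  fixes y :: "real ^ 'n"
  assumes y: "y \<in> Delta"
  shows "(\<lambda>t. (Fmap ^^ t) y) \<longlonglongrightarrow> uniform_on_support y"
proof (rule vec_tendstoI)
  obtain a b where a: "\<And>i. y $ i \<le> y $ a" and b_pos: "0 < y $ b"
    and b: "\<And>i. y $ i = 0 \<or> y $ b \<le> y $ i"
    using Delta_extreme_coords[OF y] by blast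
  define c where "c = 1 - y $ b / real CARD('n)"
  have "0 \<le> c" "c < 1"
    using Delta_le_1[OF y, of b] b_pos card_ge_2_real by (auto simp: c_def field_simps)
  hence c_pow: "(\<lambda>t. c ^ t * (y $ a - y $ b)) \<longlonglongrightarrow> 0"
    by (intro tendsto_mult_left_zero LIMSEQ_power_zero) auto
  fix i
  show "(\<lambda>t. (Fmap ^^ t) y $ i) \<longlonglongrightarrow> uniform_on_support y $ i"
  proof (cases "y $ i = 0")
    case True
    hence "(Fmap ^^ t) y $ i = 0" for t using Fmap_iter_eq_0_iff[OF y] by simp
    thus ?thesis using True by (simp add: uniform_on_support_def)
  next
    case False
    have "(\<lambda>t. (Fmap ^^ t) y $ i - 1 / real (card {j. y $ j \<noteq> 0})) \<longlonglongrightarrow> 0"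
      using Fmap_iter_deviation_le[OF y a b False] c_pow
      by (intro Lim_null_comparison[OF _ c_pow]) (simp add: c_def)
    thus ?thesis using False by (simp add: uniform_on_support_def LIM_zero_iff)
  qed
qed

lemma Fmap_uniform_on_support:
  fixes y :: "real ^ 'n"
  assumes y: "y \<in> Delta"
  shows "Fmap (uniform_on_support y) = uniform_on_support y"
proof -
  define k where "k = real (card {j. y $ j \<noteq> 0})"
  have k: "1 \<le> k"
    using Delta_support_nonempty[OF y] by (simp add: k_def Suc_le_eq card_gt_0_iff)
  have "Lsq (uniform_on_support y) = (\<Sum>i\<in>{j. y $ j \<noteq> 0}. (1 / k)\<^sup>2)"
    unfolding Lsq_def uniform_on_support_def k_def by (rule sum.mono_neutral_cong_right) auto
  also have "\<dots> = 1 / k" using k by (simp add: k_def power2_eq_square)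
  finally have "Lsq (uniform_on_support y) = 1 / k" .
  moreover have "1 / k < real CARD('n)"
    using k card_ge_2_real by (smt (verit) divide_le_eq_1)
  ultimately show ?thesis
    by (auto simp: vec_eq_iff Fmap_nth uniform_on_support_def k_def[symmetric] field_simps)
qed

lemma Fmap_iter_dist_center_less:
  fixes y :: "real ^ 'n"
  assumes y: "y \<in> Delta" and d: "dist y simplex_center < d" "d \<le> 1 / real CARD('n)"
  shows "dist ((Fmap ^^ t) y) simplex_center < 2 * real CARD('n) * d"
proof -
  let ?N = "real CARD('n)"
  have near: "dist y simplex_center < 1 / ?N" using d by linarith
  have pos: "y $ i \<noteq> 0" for i using near_simplex_center_pos[OF near, of i] by simp
  obtain a b where a: "\<And>i. y $ i \<le> y $ a" and b: "\<And>i. y $ i = 0 \<or> y $ b \<le> y $ i"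
    using Delta_extreme_coords[OF y] by metis
  have c: "0 \<le> 1 - y $ b / ?N" "1 - y $ b / ?N \<le> 1"
    using Delta_nonneg[OF y, of b] Delta_le_1[OF y, of b] card_ge_2_real by (simp_all add: field_simps)
  have dev: "\<bar>(Fmap ^^ t) y $ i - 1 / ?N\<bar> \<le> y $ a - y $ b" for i
  proof -
    have "\<bar>(Fmap ^^ t) y $ i - 1 / ?N\<bar> \<le> (1 - y $ b / ?N) ^ t * (y $ a - y $ b)"
      using Fmap_iter_deviation_le[OF y a b pos] pos by simp
    also have "\<dots> \<le> 1 * (y $ a - y $ b)"
      using c a[of b] by (intro mult_right_mono power_le_one) auto
    finally show ?thesis by simp
  qed
  have "dist ((Fmap ^^ t) y) simplex_center \<le> (\<Sum>i\<in>UNIV. \<bar>((Fmap ^^ t) y - simplex_center) $ i\<bar>)"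
    unfolding dist_norm by (rule norm_le_l1_cart)
  also have "\<dots> \<le> (\<Sum>i\<in>(UNIV :: 'n set). y $ a - y $ b)"
    using dev by (intro sum_mono) simp
  also have "\<dots> = ?N * (y $ a - y $ b)" by simp
  also have "\<dots> < ?N * (2 * d)"
    using dist_simplex_center_coord_le[of y a] dist_simplex_center_coord_le[of y b] d(1)
    by (intro mult_strict_left_mono) auto
  finally show ?thesis by simp
qed

lemma simplex_center_loc_asym_stable: "loc_asym_stable_on Delta Fmap (simplex_center :: real ^ 'n)"
  unfolding loc_asym_stable_on_def stable_on_def
proof (intro conjI allI impI)
  let ?N = "real CARD('n)"
  fix e :: real assume "0 < e"
  define d where "d = min (1 / ?N) (e / (2 * ?N))"
  have d: "0 < d" "d \<le> 1 / ?N" "2 * ?N * d \<le> e"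
    using \<open>0 < e\<close> by (auto simp: d_def min_def field_simps)
  show "\<exists>\<delta>>0. \<forall>y\<in>Delta. dist y (simplex_center :: real ^ 'n) < \<delta> \<longrightarrow> (\<forall>t. dist ((Fmap ^^ t) y) simplex_center < e)"
  proof (intro exI[of _ d] conjI ballI impI allI)
    fix y :: "real ^ 'n" and t assume "y \<in> Delta" "dist y simplex_center < d"
    hence "dist ((Fmap ^^ t) y) simplex_center < 2 * ?N * d"
      using d(2) by (rule Fmap_iter_dist_center_less)
    thus "dist ((Fmap ^^ t) y) simplex_center < e" using d(3) by linarith
  qed (rule d(1))
next
  show "\<exists>\<delta>>0. \<forall>y\<in>Delta. dist y (simplex_center :: real ^ 'n) < \<delta> \<longrightarrow> (\<lambda>t. (Fmap ^^ t) y) \<longlonglongrightarrow> simplex_center"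
  proof (intro exI[of _ "1 / real CARD('n)"] conjI ballI impI)
    fix y :: "real ^ 'n" assume y: "y \<in> Delta" and near: "dist y simplex_center < 1 / real CARD('n)"
    have "y $ i \<noteq> 0" for i using near_simplex_center_pos[OF near, of i] by simp
    hence "uniform_on_support y = simplex_center" by (rule uniform_on_support_eq_center)
    thus "(\<lambda>t. (Fmap ^^ t) y) \<longlonglongrightarrow> simplex_center"
      using Fmap_iter_tendsto_uniform_on_support[OF y] by simp
  qed simp
qed

text \<open>Points on the segment from the limit towards the centre have full support, so their
  orbits converge to the centre instead.\<close>
lemma uniform_on_support_unstable:
  fixes y :: "real ^ 'n"
  assumes y: "y \<in> Delta" and j: "y $ j = 0"
  shows "unstable_on Delta Fmap (uniform_on_support y)"
proof (rule unstable_onI)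
  let ?q = "uniform_on_support y"
  have "?q $ j = 0" using j by (simp add: uniform_on_support_def)
  thus "?q \<noteq> simplex_center" by auto
  hence e: "0 < dist simplex_center ?q" by simp
  fix d :: real assume "0 < d"
  define s where "s = min 1 (d / (2 * dist simplex_center ?q))"
  have s: "0 < s" "s \<le> 1" "s * dist simplex_center ?q < d"
    using \<open>0 < d\<close> e by (auto simp: s_def min_def field_simps)
  let ?z = "?q + s *\<^sub>R (simplex_center - ?q)"
  note z = segment_to_simplex_center[OF uniform_on_support_Delta[OF y] s(1,2)]
  show "\<exists>z\<in>Delta. dist z ?q < d \<and> (\<lambda>t. (Fmap ^^ t) z) \<longlonglongrightarrow> simplex_center"
  proof (intro bexI conjI)
    show "dist ?z ?q < d" using s by (simp add: dist_norm)
    have "uniform_on_support ?z = simplex_center"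
      using z(2) by (intro uniform_on_support_eq_center) (metis less_irrefl)
    thus "(\<lambda>t. (Fmap ^^ t) ?z) \<longlonglongrightarrow> simplex_center"
      using Fmap_iter_tendsto_uniform_on_support[OF z(1)] by simp
  qed (rule z(1))
qed

end

theorem theorem1:
  fixes p0 :: "real ^ 'n"
  assumes n2: "CARD('n) \<ge> 2"
    and p0: "p0 \<in> Delta"
  defines "m \<equiv> card {i. p0 $ i = 0}"
  shows "\<exists>pinf rinf.
     (\<lambda>t. (Fmap ^^ t) p0) \<longlonglongrightarrow> pinf \<and>
     (\<lambda>t. rvec ((Fmap ^^ t) p0)) \<longlonglongrightarrow> rinf \<and>
     Fmap pinf = pinf \<and>
     (m = 0 \<longrightarrow> pinf = rinf \<and>
        (\<forall>i. pinf $ i = 1 / real CARD('n) \<and> rinf $ i = 1 / real CARD('n))) \<and>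
     (1 \<le> m \<and> m < CARD('n) \<longrightarrow> pinf \<noteq> rinf \<and>
        (\<forall>j. p0 $ j = 0 \<longrightarrow> pinf $ j = 0 \<and> rinf $ j = 1 / (real CARD('n) - 1)) \<and>
        (\<forall>i. p0 $ i > 0 \<longrightarrow> pinf $ i = 1 / (real CARD('n) - real m) \<and>
             rinf $ i = (real CARD('n) - real m - 1) / ((real CARD('n) - 1) * (real CARD('n) - real m)))) \<and>
     loc_asym_stable_on Delta Fmap (\<chi> i. 1 / real CARD('n) :: real ^ 'n) \<and>
     (1 \<le> m \<longrightarrow> unstable_on Delta Fmap pinf)"
proof -
  let ?N = "real CARD('n)"
  define pinf where "pinf = uniform_on_support p0"
  have N: "2 \<le> ?N" by (rule card_ge_2_real[OF n2])
  have "0 < real (card {j. p0 $ j \<noteq> 0})"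
    using Delta_support_nonempty[OF p0] by (simp add: card_gt_0_iff)
  hence "real m < ?N" using card_support_eq[of p0] by (simp add: m_def)
  have pinf_nth: "pinf $ i = (if p0 $ i = 0 then 0 else 1 / (?N - real m))" for i
    by (simp add: pinf_def uniform_on_support_def card_support_eq m_def)
  have m_pos: "1 \<le> m \<longleftrightarrow> (\<exists>j. p0 $ j = 0)"
    by (auto simp: m_def Suc_le_eq card_gt_0_iff)
  show ?thesis
  proof (rule exI[of _ pinf], rule exI[of _ "rvec pinf"], intro conjI impI)
    show conv: "(\<lambda>t. (Fmap ^^ t) p0) \<longlonglongrightarrow> pinf"
      unfolding pinf_def by (rule Fmap_iter_tendsto_uniform_on_support[OF n2 p0])
    show "(\<lambda>t. rvec ((Fmap ^^ t) p0)) \<longlonglongrightarrow> rvec pinf" using conv by (rule tendsto_rvec)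
    show "Fmap pinf = pinf" unfolding pinf_def by (rule Fmap_uniform_on_support[OF n2 p0])
    show "loc_asym_stable_on Delta Fmap (\<chi> i. 1 / real CARD('n) :: real ^ 'n)"
      by (rule simplex_center_loc_asym_stable[OF n2])
    show "unstable_on Delta Fmap pinf" if "1 \<le> m"
      using that m_pos uniform_on_support_unstable[OF n2 p0] unfolding pinf_def by blast
  qed (use N \<open>real m < ?N\<close> m_pos in \<open>auto simp: rvec_def vec_eq_iff pinf_nth field_simps\<close>)
qed

end
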